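(* Let $h:\mathbb R^n\to\mathbb R$, $h(x):=\|g_r(x)\|-g_0(x)$. For every $\delta>0$ there exist $\epsilon>0$ and a neighborhood $U$ of $\bar x$ such that for every $x_0\in U$ with $g_r(x_0)\neq0$, $|h(x_0)|<\epsilon\|g_r(x_0)\|$ and $\|\nabla h(x_0)\|\ge\delta$, there exists $\tilde x\in\mathbb R^n$ with $h(\tilde x)=0$ and $\|\tilde x-x_0\|\le 2|h(x_0)|/\delta$.
   Context: Let $n,m\ge1$ and let $g=(g_0,g_r):\mathbb R^n\to\mathbb R\times\mathbb R^m$ be $C^2$-smooth around a point $\bar x\in\mathbb R^n$ with $g(\bar x)=0$. (Note $h$ is $C^2$ near every point $x$ with $g_r(x)\ne0$ close to $\bar x$.) *)

theory Defs
  imports "HOL-Analysis.Analysis"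
begin

definition C2_on :: "'a::real_normed_vector set \<Rightarrow> ('a \<Rightarrow> 'b::real_normed_vector) \<Rightarrow> bool" where
  "C2_on V f \<longleftrightarrow> (\<exists>f' :: 'a \<Rightarrow> ('a \<Rightarrow>\<^sub>L 'b). \<exists>f'' :: 'a \<Rightarrow> ('a \<Rightarrow>\<^sub>L ('a \<Rightarrow>\<^sub>L 'b)).
      (\<forall>x\<in>V. (f has_derivative blinfun_apply (f' x)) (at x)) \<and>
      (\<forall>x\<in>V. (f' has_derivative blinfun_apply (f'' x)) (at x)) \<and>
      continuous_on V f'')"

definition C2_near :: "('a::real_normed_vector \<Rightarrow> 'b::real_normed_vector) \<Rightarrow> 'a \<Rightarrow> bool" where
  "C2_near f a \<longleftrightarrow> (\<exists>V. open V \<and> a \<in> V \<and> C2_on V f)"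

end

theory Submission
  imports Defs
begin

text \<open>Near \<open>xbar\<close> the map \<open>g\<close> is uniformly close to its linearisation, and where
\<open>g\<^sub>r(x\<^sub>0) \<noteq> 0\<close> the first-order error of \<open>\<parallel>g\<^sub>r\<parallel>\<close> is at most
\<open>\<parallel>\<Delta>g\<^sub>r\<parallel>\<^sup>2 / \<parallel>g\<^sub>r(x\<^sub>0)\<parallel>\<close>. Hence, if \<open>|h(x\<^sub>0)|\<close> is small compared with
\<open>\<parallel>g\<^sub>r(x\<^sub>0)\<parallel>\<close>, then on the ball of radius \<open>t = 2|h(x\<^sub>0)|/\<delta>\<close> around \<open>x\<^sub>0\<close> the
function \<open>h\<close> deviates from its affine model by at most \<open>|h(x\<^sub>0)|\<close>. A step of length \<open>t\<close>
along \<open>\<nabla>h(x\<^sub>0)\<close>, against the sign of \<open>h(x\<^sub>0)\<close>, lowers the model by \<open>t\<parallel>\<nabla>h\<parallel> \<ge> 2|h(x\<^sub>0)|\<close>,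
so \<open>h\<close> changes sign on that segment and vanishes there by the intermediate value theorem.\<close>

lemma norm_linearization_error_le:
  fixes a b :: "'a::real_inner"
  assumes "a \<noteq> 0"
  shows "\<bar>norm b - norm a - sgn a \<bullet> (b - a)\<bar> \<le> (norm (b - a))\<^sup>2 / norm a"
proof -
  have na: "norm a > 0" using assms by simp
  have cs: "a \<bullet> b \<le> norm a * norm b" by (rule norm_cauchy_schwarz)
  have "norm b - norm a - sgn a \<bullet> (b - a) = (norm a * norm b - a \<bullet> b) / norm a"
    using na by (simp add: sgn_div_norm inner_diff_right field_simps dot_square_norm power2_eq_square)
  moreover have "norm a * norm b - a \<bullet> b \<le> (norm (b - a))\<^sup>2"
  proof -
    have "(norm (b - a))\<^sup>2 = (norm a)\<^sup>2 + (norm b)\<^sup>2 - 2 * (a \<bullet> b)"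
      by (simp add: power2_norm_eq_inner inner_diff inner_commute)
    moreover have "0 \<le> (norm a - norm b)\<^sup>2" by simp
    ultimately show ?thesis using cs by (simp add: power2_eq_square algebra_simps)
  qed
  ultimately show ?thesis using na cs by (simp add: divide_right_mono)
qed

lemma norm_snd_minus_fst_linearization_le:
  fixes p q l :: "real \<times> 'b::real_inner"
  assumes "snd p \<noteq> 0"
  shows "\<bar>(norm (snd q) - fst q) - (norm (snd p) - fst p) - (sgn (snd p) \<bullet> snd l - fst l)\<bar>
           \<le> (norm (snd q - snd p))\<^sup>2 / norm (snd p) + 2 * norm (q - p - l)"
proof -
  define w where "w = q - p - l"
  have "(norm (snd q) - fst q) - (norm (snd p) - fst p) - (sgn (snd p) \<bullet> snd l - fst l)
      = (norm (snd q) - norm (snd p) - sgn (snd p) \<bullet> (snd q - snd p)) + sgn (snd p) \<bullet> snd w - fst w"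
    by (simp add: w_def inner_diff_right algebra_simps)
  moreover have "\<bar>sgn (snd p) \<bullet> snd w\<bar> \<le> norm w"
  proof -
    have "\<bar>sgn (snd p) \<bullet> snd w\<bar> \<le> norm (sgn (snd p)) * norm (snd w)"
      by (rule Cauchy_Schwarz_ineq2)
    also have "\<dots> \<le> norm w"
      using assms by (simp add: norm_sgn) (metis norm_snd_le prod.collapse)
    finally show ?thesis .
  qed
  moreover have "\<bar>fst w\<bar> \<le> norm w"
    by (metis norm_fst_le prod.collapse real_norm_def)
  ultimately show ?thesis
    using norm_linearization_error_le[OF assms, of "snd q"] by (simp add: w_def)
qed

lemma exists_zero_on_closed_segment:
  fixes f :: "'a::real_normed_vector \<Rightarrow> real"
  assumes "continuous_on (closed_segment a b) f" and "f a * f b \<le> 0"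
  shows "\<exists>z\<in>closed_segment a b. f z = 0"
proof -
  have "connected (f ` closed_segment a b)"
    using assms(1) by (simp add: connected_continuous_image)
  then have "{min (f a) (f b)..max (f a) (f b)} \<subseteq> f ` closed_segment a b"
    by (rule connected_contains_Icc) (auto simp: min_def max_def)
  moreover have "min (f a) (f b) \<le> 0" "0 \<le> max (f a) (f b)"
    using assms(2) by (auto simp: mult_le_0_iff)
  ultimately show ?thesis by force
qed

lemma zero_in_cball_of_affine_approximation:
  fixes f :: "'a::real_inner \<Rightarrow> real"
  assumes cont: "continuous_on (cball x0 t) f"
    and t: "0 \<le> t" "2 * \<bar>f x0\<bar> \<le> t * norm G"
    and approx: "\<And>y. y \<in> cball x0 t \<Longrightarrow> \<bar>f y - f x0 - G \<bullet> (y - x0)\<bar> \<le> \<bar>f x0\<bar>"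
  shows "\<exists>z\<in>cball x0 t. f z = 0"
proof -
  define s where "s = sgn (f x0)"
  \<comment> \<open>The step against the sign of \<open>f x0\<close> along \<open>G\<close>. If \<open>G = 0\<close>, division by zero makes
    it vanish, and then the hypotheses force \<open>f x0 = 0\<close>.\<close>
  define x1 where "x1 = x0 - (t * s / norm G) *\<^sub>R G"
  have step: "x1 - x0 = - (t * s / norm G) *\<^sub>R G"
    by (simp add: x1_def)
  have slope: "G \<bullet> (x1 - x0) = - t * s * norm G"
    unfolding step by (cases "G = 0") (simp_all add: power2_norm_eq_inner[symmetric] power2_eq_square)
  have "norm (x1 - x0) \<le> t"
    using t(1) by (cases "G = 0") (auto simp: step s_def abs_sgn_eq abs_mult)
  then have segment: "closed_segment x0 x1 \<subseteq> cball x0 t"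
    using t(1) by (intro closed_segment_subset) (auto simp: dist_norm norm_minus_commute)
  have "s * f x1 \<le> 0"
  proof (cases "f x0 = 0")
    case False
    then have s2: "s * s = 1" and sf0: "s * f x0 = \<bar>f x0\<bar>" and "\<bar>s\<bar> = 1"
      by (auto simp: s_def sgn_if)
    have "s * f x1 = s * f x0 + s * (G \<bullet> (x1 - x0)) + s * (f x1 - f x0 - G \<bullet> (x1 - x0))"
      by (simp add: algebra_simps)
    also have "\<dots> \<le> \<bar>f x0\<bar> - t * norm G + \<bar>f x1 - f x0 - G \<bullet> (x1 - x0)\<bar>"
    proof -
      have "s * (G \<bullet> (x1 - x0)) = - t * norm G"
        using s2 by (simp add: slope)
      moreover have "s * (f x1 - f x0 - G \<bullet> (x1 - x0)) \<le> \<bar>f x1 - f x0 - G \<bullet> (x1 - x0)\<bar>"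
        using \<open>\<bar>s\<bar> = 1\<close> by (metis abs_ge_self abs_mult mult_1)
      ultimately show ?thesis using sf0 by linarith
    qed
    finally show ?thesis
      using approx[of x1] segment t(2) by auto
  qed (simp add: s_def)
  then have "f x0 * f x1 \<le> 0"
    by (metis s_def abs_mult_sgn abs_ge_zero mult.assoc mult_nonneg_nonpos)
  then show ?thesis
    using exists_zero_on_closed_segment[OF continuous_on_subset[OF cont segment]] segment by blast
qed

lemma has_derivative_norm_snd_minus_fst:
  fixes g :: "'a::real_normed_vector \<Rightarrow> real \<times> 'b::real_inner"
  assumes "(g has_derivative D) (at x)" and "snd (g x) \<noteq> 0"
  shows "((\<lambda>x. norm (snd (g x)) - fst (g x)) has_derivative
           (\<lambda>v. sgn (snd (g x)) \<bullet> snd (D v) - fst (D v))) (at x)"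
  using has_derivative_diff[OF has_derivative_compose[OF has_derivative_snd[OF assms(1)]
        has_derivative_norm[OF assms(2)]] has_derivative_fst[OF assms(1)]]
  by (simp add: inner_commute)

lemma locally_uniform_linearization:
  fixes g :: "'a::real_normed_vector \<Rightarrow> 'b::real_normed_vector" and D :: "'a \<Rightarrow> 'a \<Rightarrow>\<^sub>L 'b"
  assumes "open V" "a \<in> V"
    and deriv: "\<And>x. x \<in> V \<Longrightarrow> (g has_derivative blinfun_apply (D x)) (at x)"
    and "continuous (at a) D" and "\<eta> > 0"
  obtains r where "r > 0" "ball a r \<subseteq> V"
    "\<And>x y. x \<in> ball a r \<Longrightarrow> y \<in> ball a r \<Longrightarrow> norm (g y - g x - D x (y - x)) \<le> \<eta> * norm (y - x)"
    "\<And>x y. x \<in> ball a r \<Longrightarrow> y \<in> ball a r \<Longrightarrow> norm (g y - g x) \<le> (norm (D a) + \<eta>) * norm (y - x)"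
proof -
  obtain r1 where "r1 > 0" and r1: "\<And>x. dist x a < r1 \<Longrightarrow> dist (D x) (D a) < \<eta> / 2"
    using assms(4,5) unfolding continuous_at_eps_delta by (meson half_gt_zero)
  obtain r2 where "r2 > 0" "ball a r2 \<subseteq> V" using assms(1,2) openE by blast
  define r where "r = min r1 r2"
  have sub: "ball a r \<subseteq> V" using \<open>ball a r2 \<subseteq> V\<close> by (auto simp: r_def)
  have close: "norm (D x - D a) < \<eta> / 2" if "x \<in> ball a r" for x
    using r1[of x] that by (auto simp: r_def dist_norm norm_minus_commute)
  have deriv_within: "(g has_derivative blinfun_apply (D z)) (at z within ball a r)" if "z \<in> ball a r" for z
    using deriv sub that has_derivative_at_withinI by blast
  have "norm (g y - g x - D x (y - x)) \<le> \<eta> * norm (y - x)"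
    if "x \<in> ball a r" "y \<in> ball a r" for x y
  proof -
    have "norm (g y - g x - D x (y - x)) \<le> norm (y - x) * \<eta>"
    proof (rule differentiable_bound_linearization[of x y "ball a r"])
      show "x + t *\<^sub>R (y - x) \<in> ball a r" if "t \<in> {0..1}" for t
        using convexD_alt[of "ball a r" x y t] \<open>x \<in> ball a r\<close> \<open>y \<in> ball a r\<close> that
        by (simp add: algebra_simps)
      show "onorm (blinfun_apply (D z) - blinfun_apply (D x)) \<le> \<eta>" if "z \<in> ball a r" for z
      proof -
        have "norm (D z - D x) \<le> norm (D z - D a) + norm (D x - D a)"
          by (metis norm_diff_triangle_le norm_minus_commute order_refl)
        then show ?thesis
          using close[OF that] close[OF \<open>x \<in> ball a r\<close>]
          by (simp add: norm_blinfun.rep_eq fun_diff_def flip: blinfun.diff_left)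
      qed
    qed (use that deriv_within in auto)
    then show ?thesis by (simp add: mult.commute)
  qed
  moreover have "norm (g y - g x) \<le> (norm (D a) + \<eta>) * norm (y - x)"
    if "x \<in> ball a r" "y \<in> ball a r" for x y
  proof (rule differentiable_bound[of "ball a r"])
    show "onorm (blinfun_apply (D z)) \<le> norm (D a) + \<eta>" if "z \<in> ball a r" for z
      using close[OF that] norm_triangle_sub[of "D z" "D a"] \<open>\<eta> > 0\<close>
      by (simp add: norm_blinfun.rep_eq)
  qed (use that deriv_within in auto)
  moreover have "r > 0" using \<open>r1 > 0\<close> \<open>r2 > 0\<close> by (simp add: r_def)
  ultimately show ?thesis using that sub by blast
qed

lemma norm_snd_minus_fst_zero_near:
  fixes g :: "'a::real_inner \<Rightarrow> real \<times> 'b::real_inner" and h :: "'a \<Rightarrow> real"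
  assumes h_def: "\<And>x. h x = norm (snd (g x)) - fst (g x)"
    and cont: "continuous_on S g"
    and ball: "cball x0 (2 * \<bar>h x0\<bar> / \<delta>) \<subseteq> S"
    and deriv: "(g has_derivative D) (at x0)"
    and lin: "\<And>y. y \<in> S \<Longrightarrow> norm (g y - g x0 - D (y - x0)) \<le> \<delta> / 8 * norm (y - x0)"
    and lip: "\<And>y. y \<in> S \<Longrightarrow> norm (g y - g x0) \<le> L * norm (y - x0)"
    and nz: "snd (g x0) \<noteq> 0"
    and small: "8 * L\<^sup>2 * \<bar>h x0\<bar> \<le> \<delta>\<^sup>2 * norm (snd (g x0))"
    and grad: "(h has_derivative (\<lambda>v. G \<bullet> v)) (at x0)"
    and G: "\<delta> \<le> norm G" and "\<delta> > 0"
  shows "\<exists>xt. h xt = 0 \<and> norm (xt - x0) \<le> 2 * \<bar>h x0\<bar> / \<delta>"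
proof -
  define t where "t = 2 * \<bar>h x0\<bar> / \<delta>"
  define a where "a = snd (g x0)"
  have t: "0 \<le> t" "t * \<delta> = 2 * \<bar>h x0\<bar>" using \<open>\<delta> > 0\<close> by (auto simp: t_def)
  have na: "norm a > 0" using nz by (simp add: a_def)
  have "h = (\<lambda>x. norm (snd (g x)) - fst (g x))" using h_def by blast
  then have "(h has_derivative (\<lambda>v. sgn a \<bullet> snd (D v) - fst (D v))) (at x0)"
    using has_derivative_norm_snd_minus_fst[OF deriv nz] by (simp add: a_def)
  then have gradient: "G \<bullet> v = sgn a \<bullet> snd (D v) - fst (D v)" for v
    using has_derivative_unique[OF grad] by metis
  have "\<bar>h y - h x0 - G \<bullet> (y - x0)\<bar> \<le> \<bar>h x0\<bar>" if y: "y \<in> cball x0 t" for y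
  proof -
    have "y \<in> S" and ny: "norm (y - x0) \<le> t"
      using y ball by (auto simp: t_def dist_norm norm_minus_commute)
    have "norm (snd (g y) - a) \<le> norm (g y - g x0)"
      unfolding a_def by (metis norm_snd_le prod.collapse snd_diff)
    then have "norm (snd (g y) - a) \<le> L * norm (y - x0)"
      using lip[OF \<open>y \<in> S\<close>] by linarith
    then have "(norm (snd (g y) - a))\<^sup>2 \<le> (L * norm (y - x0))\<^sup>2"
      by (rule power_mono) simp
    also have "\<dots> \<le> L\<^sup>2 * t\<^sup>2"
      using ny by (simp add: power_mult_distrib mult_left_mono power_mono)
    finally have snd_sq: "(norm (snd (g y) - a))\<^sup>2 \<le> L\<^sup>2 * t\<^sup>2" .
    have lin_t: "norm (g y - g x0 - D (y - x0)) \<le> \<delta> / 8 * t"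
      using \<open>\<delta> > 0\<close> by (intro order_trans[OF lin[OF \<open>y \<in> S\<close>] mult_left_mono[OF ny]]) simp
    have "\<bar>h y - h x0 - G \<bullet> (y - x0)\<bar>
        \<le> (norm (snd (g y) - a))\<^sup>2 / norm a + 2 * norm (g y - g x0 - D (y - x0))"
      using norm_snd_minus_fst_linearization_le[OF nz, of "g y" "D (y - x0)"]
      by (simp add: h_def gradient a_def)
    also have "\<dots> \<le> L\<^sup>2 * t\<^sup>2 / norm a + 2 * (\<delta> / 8 * t)"
      using snd_sq lin_t na by (intro add_mono divide_right_mono) simp_all
    also have "\<dots> \<le> t * \<delta> / 4 + t * \<delta> / 4"
    proof -
      have "L\<^sup>2 * t \<le> \<delta> * norm a / 4"
        using small \<open>\<delta> > 0\<close> by (simp add: t_def a_def field_simps power2_eq_square)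
      then have "L\<^sup>2 * t\<^sup>2 \<le> t * \<delta> / 4 * norm a"
        using mult_left_mono[OF _ t(1), of "L\<^sup>2 * t" "\<delta> * norm a / 4"]
        by (simp add: power2_eq_square algebra_simps)
      then have "L\<^sup>2 * t\<^sup>2 / norm a \<le> t * \<delta> / 4"
        using na by (simp add: divide_le_eq)
      moreover have "2 * (\<delta> / 8 * t) = t * \<delta> / 4" by simp
      ultimately show ?thesis by linarith
    qed
    finally show ?thesis using t(2) by simp
  qed
  moreover have "continuous_on (cball x0 t) h"
    unfolding h_def using continuous_on_subset[OF cont ball[folded t_def]]
    by (intro continuous_intros)
  moreover have "2 * \<bar>h x0\<bar> \<le> t * norm G"
    using t mult_left_mono[OF G t(1)] by simp
  ultimately obtain z where "z \<in> cball x0 t" "h z = 0"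
    using zero_in_cball_of_affine_approximation[of x0 t h G] t(1) by blast
  then show ?thesis by (auto simp: t_def dist_norm norm_minus_commute)
qed

lemma norm_snd_minus_fst_zero_near_in_ball:
  fixes g :: "'a::real_inner \<Rightarrow> real \<times> 'b::real_inner" and h :: "'a \<Rightarrow> real"
  assumes h_def: "\<And>x. h x = norm (snd (g x)) - fst (g x)"
    and cont: "continuous_on (ball c r) g"
    and deriv: "(g has_derivative D) (at x0)"
    and lin: "\<And>y. y \<in> ball c r \<Longrightarrow> norm (g y - g x0 - D (y - x0)) \<le> \<delta> / 8 * norm (y - x0)"
    and lip: "\<And>y. y \<in> ball c r \<Longrightarrow> norm (g y - g x0) \<le> L * norm (y - x0)"
    and "L > 0" "\<delta> > 0"
    and x0: "dist c x0 < r / 2"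
    and g_small: "\<delta> * norm (snd (g x0)) \<le> 2 * L\<^sup>2 * r"
    and nz: "snd (g x0) \<noteq> 0"
    and h_small: "\<bar>h x0\<bar> < \<delta>\<^sup>2 / (8 * L\<^sup>2) * norm (snd (g x0))"
    and grad: "(h has_derivative (\<lambda>v. G \<bullet> v)) (at x0)"
    and G: "\<delta> \<le> norm G"
  shows "\<exists>xt. h xt = 0 \<and> norm (xt - x0) \<le> 2 * \<bar>h x0\<bar> / \<delta>"
proof -
  have "8 * L\<^sup>2 * \<bar>h x0\<bar> < 8 * L\<^sup>2 * (\<delta>\<^sup>2 / (8 * L\<^sup>2) * norm (snd (g x0)))"
    using h_small \<open>L > 0\<close> by (intro mult_strict_left_mono) simp_all
  also have "\<dots> = \<delta> * (\<delta> * norm (snd (g x0)))"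
    using \<open>L > 0\<close> by (simp add: power2_eq_square)
  finally have small: "8 * L\<^sup>2 * \<bar>h x0\<bar> < \<delta> * (\<delta> * norm (snd (g x0)))" .
  also have "\<dots> \<le> \<delta> * (2 * L\<^sup>2 * r)"
    using g_small \<open>\<delta> > 0\<close> by (intro mult_left_mono) simp_all
  finally have "\<bar>h x0\<bar> < \<delta> * r / 4"
    using \<open>L > 0\<close> by (simp add: field_simps)
  then have t_small: "2 * \<bar>h x0\<bar> / \<delta> < r / 2"
    using \<open>\<delta> > 0\<close> by (simp add: divide_less_eq mult.commute)
  have ball: "cball x0 (2 * \<bar>h x0\<bar> / \<delta>) \<subseteq> ball c r"
  proof
    fix y assume "y \<in> cball x0 (2 * \<bar>h x0\<bar> / \<delta>)"
    then have "dist x0 y < r / 2" using t_small by simp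
    then show "y \<in> ball c r" using x0 dist_triangle[of c y x0] by simp
  qed
  show ?thesis
    using small
    by (intro norm_snd_minus_fst_zero_near[OF h_def cont ball deriv lin lip nz _ grad G \<open>\<delta> > 0\<close>])
      (simp_all add: power2_eq_square)
qed

lemma norm_snd_minus_fst_zero_near_uniformly:
  fixes g :: "'a::real_inner \<Rightarrow> real \<times> 'b::real_inner" and h :: "'a \<Rightarrow> real"
    and D :: "'a \<Rightarrow> 'a \<Rightarrow>\<^sub>L (real \<times> 'b)"
  assumes "open V" "xbar \<in> V"
    and deriv: "\<And>x. x \<in> V \<Longrightarrow> (g has_derivative blinfun_apply (D x)) (at x)"
    and "continuous (at xbar) D"
    and g0: "g xbar = 0"
    and h_def: "\<And>x. h x = norm (snd (g x)) - fst (g x)"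
    and "\<delta> > 0"
  shows "\<exists>\<epsilon>>0. \<exists>U. open U \<and> xbar \<in> U \<and>
           (\<forall>x0\<in>U. \<forall>G.
              snd (g x0) \<noteq> 0 \<and> \<bar>h x0\<bar> < \<epsilon> * norm (snd (g x0)) \<and>
              (h has_derivative (\<lambda>v. G \<bullet> v)) (at x0) \<and> norm G \<ge> \<delta>
              \<longrightarrow> (\<exists>xt. h xt = 0 \<and> norm (xt - x0) \<le> 2 * \<bar>h x0\<bar> / \<delta>))"
proof -
  have "\<delta> / 8 > 0" using \<open>\<delta> > 0\<close> by simp
  then obtain r where "r > 0" "ball xbar r \<subseteq> V"
    and lin: "\<And>x y. x \<in> ball xbar r \<Longrightarrow> y \<in> ball xbar r \<Longrightarrow>
                norm (g y - g x - D x (y - x)) \<le> \<delta> / 8 * norm (y - x)"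
    and lip: "\<And>x y. x \<in> ball xbar r \<Longrightarrow> y \<in> ball xbar r \<Longrightarrow>
                norm (g y - g x) \<le> (norm (D xbar) + \<delta> / 8) * norm (y - x)"
    using locally_uniform_linearization[OF assms(1-4)] by blast
  define L where "L = norm (D xbar) + \<delta> / 8"
  have "L > 0" using \<open>\<delta> > 0\<close> by (simp add: L_def add_nonneg_pos)
  have g_cont: "continuous_on (ball xbar r) g"
    using deriv \<open>ball xbar r \<subseteq> V\<close>
    by (meson continuous_at_imp_continuous_on has_derivative_continuous subsetD)
  have "continuous (at xbar) g" using deriv[OF \<open>xbar \<in> V\<close>] by (rule has_derivative_continuous)
  moreover have "2 * L\<^sup>2 * r / \<delta> > 0" using \<open>L > 0\<close> \<open>r > 0\<close> \<open>\<delta> > 0\<close> by simp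
  ultimately obtain r' where "r' > 0"
    and g_cont_at: "\<forall>x. dist x xbar < r' \<longrightarrow> dist (g x) (g xbar) < 2 * L\<^sup>2 * r / \<delta>"
    unfolding continuous_at_eps_delta by blast
  have g_small: "\<delta> * norm (snd (g x)) \<le> 2 * L\<^sup>2 * r" if "dist x xbar < r'" for x
  proof -
    have "\<delta> * norm (snd (g x)) \<le> \<delta> * norm (g x)"
      using norm_snd_le[of "snd (g x)" "fst (g x)"] \<open>\<delta> > 0\<close> by (intro mult_left_mono) simp_all
    moreover have "\<delta> * norm (g x) < 2 * L\<^sup>2 * r"
      using g_cont_at that \<open>\<delta> > 0\<close> by (simp add: g0 dist_norm field_simps)
    ultimately show ?thesis by linarith
  qed
  show ?thesis
  proof (intro exI[of _ "\<delta>\<^sup>2 / (8 * L\<^sup>2)"] exI[of _ "ball xbar (min r' (r / 2))"]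
      conjI ballI allI impI)
    fix x0 G assume x0: "x0 \<in> ball xbar (min r' (r / 2))"
    then have x0_r: "x0 \<in> ball xbar r" using zero_le_dist[of xbar x0] by (simp, linarith)
    then show "snd (g x0) \<noteq> 0 \<and> \<bar>h x0\<bar> < \<delta>\<^sup>2 / (8 * L\<^sup>2) * norm (snd (g x0)) \<and>
          (h has_derivative (\<lambda>v. G \<bullet> v)) (at x0) \<and> \<delta> \<le> norm G \<Longrightarrow>
        \<exists>xt. h xt = 0 \<and> norm (xt - x0) \<le> 2 * \<bar>h x0\<bar> / \<delta>"
      using norm_snd_minus_fst_zero_near_in_ball[OF h_def g_cont
          deriv[OF subsetD[OF \<open>ball xbar r \<subseteq> V\<close> x0_r]] lin[OF x0_r] lip[OF x0_r]]
        x0 g_small[of x0] \<open>L > 0\<close> \<open>\<delta> > 0\<close>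
      by (auto simp: L_def dist_commute)
  qed (use \<open>r > 0\<close> \<open>r' > 0\<close> \<open>\<delta> > 0\<close> \<open>L > 0\<close> in simp_all)
qed

theorem lemma5p3:
  fixes g :: "real^'n \<Rightarrow> real \<times> (real^'m)"
    and xbar :: "real^'n"
    and h :: "real^'n \<Rightarrow> real"
  assumes C2: "C2_near g xbar"
    and g0: "g xbar = 0"
    and h_def: "\<And>x. h x = norm (snd (g x)) - fst (g x)"
  shows "\<forall>\<delta>>0. \<exists>\<epsilon>>0. \<exists>U. open U \<and> xbar \<in> U \<and>
           (\<forall>x0\<in>U. \<forall>G :: real^'n.
              snd (g x0) \<noteq> 0 \<and> \<bar>h x0\<bar> < \<epsilon> * norm (snd (g x0)) \<and>
              (h has_derivative (\<lambda>v. G \<bullet> v)) (at x0) \<and> norm G \<ge> \<delta>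
              \<longrightarrow> (\<exists>xt. h xt = 0 \<and> norm (xt - x0) \<le> 2 * \<bar>h x0\<bar> / \<delta>))"
proof -
  obtain V D D2 where "open V" "xbar \<in> V"
    and deriv: "\<And>x. x \<in> V \<Longrightarrow> (g has_derivative blinfun_apply (D x)) (at x)"
    and "\<And>x. x \<in> V \<Longrightarrow> (D has_derivative blinfun_apply (D2 x)) (at x)"
    using C2 unfolding C2_near_def C2_on_def by blast
  then have "continuous (at xbar) D" using has_derivative_continuous by blast
  then show ?thesis
    by (intro allI impI norm_snd_minus_fst_zero_near_uniformly[OF \<open>open V\<close> \<open>xbar \<in> V\<close> deriv _ g0 h_def])
qed

end
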